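(* Assume $B$ is connected. Let $\varphi\colon A\to B$ be a $\mathbb{K}$-linear map and suppose there is $N\in\mathbb{N}$ such that for every $a\in A$ the series $R_\varphi(a,z)$ is a polynomial in $z$ of degree at most $N$ (i.e. $\psi_k(a)=0$ for all $k>N$ and all $a$). Then $\varphi(1)=n\cdot 1_B$ for some integer $n$ with $0\le n\le N$; for every $a\in A$ the polynomial $R_\varphi(a,z)$ has degree at most $n$; and $R_\varphi(1,z)=(1+z)^n$, so the degree is exactly $n$ for $a=1$. Moreover, for every $a\in A$, $R_\varphi(a,z)=z^n\bigl(1+\sum_{k=1}^{n}\psi_k(z^{-1}\cdot 1+a-1)\bigr)$ as polynomials/Laurent polynomials in $z$.
   Context: $\mathbb{K}=\mathbb{R}$ or $\mathbb{C}$; $A$ and $B$ are commutative associative unital $\mathbb{K}$-algebras. For a $\mathbb{K}$-linear map $\varphi\colon A\to B$ and $a\in A$, the characteristic function is $R_\varphi(a,z)=\exp\bigl(\varphi(\ln(1+az))\bigr)\in B[[z]]$, with $\ln(1+az)=\sum_{k\ge1}(-1)^{k+1}a^kz^k/k$, $\varphi$ applied coefficientwise; write $R_\varphi(a,z)=1+\sum_{k\ge1}\psi_k(a)z^k$. Each $\psi_k(a)$ is a universal polynomial in $\varphi(a),\varphi(a^2),\dots,\varphi(a^k)$, homogeneous of degree $k$ in $a$. The algebra $B$ is called connected if for every $b\in B$ and every $k\ge0$, $b(b-1)(b-2)\cdots(b-k)=0$ implies $b=j\cdot 1_B$ for some $j\in\{0,1,\dots,k\}$ (e.g. any $B$ without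 zero divisors). *)

theory Defs
  imports Complex_Main "HOL-Computational_Algebra.Formal_Power_Series"
begin

definition ln1p_fps :: "'a::real_algebra_1 \<Rightarrow> 'a fps" where
  "ln1p_fps a = Abs_fps (\<lambda>k. if k = 0 then 0
       else ((-1) ^ (k + 1) / real k) *\<^sub>R a ^ k)"

definition coeffwise :: "('a \<Rightarrow> 'b) \<Rightarrow> 'a fps \<Rightarrow> 'b fps" where
  "coeffwise f F = Abs_fps (\<lambda>k. f (fps_nth F k))"

text \<open>Exponential of a power series with zero constant term:
  exp F = sum_m F^m / m!, which is a finite sum in every coefficient.\<close>
definition exp_fps0 :: "'b::{real_algebra_1, comm_ring_1} fps \<Rightarrow> 'b fps" where
  "exp_fps0 F = Abs_fps (\<lambda>k. \<Sum>m\<le>k. (1 / fact m) *\<^sub>R fps_nth (F ^ m) k)"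

definition charR :: "('a::real_algebra_1 \<Rightarrow> 'b::{real_algebra_1, comm_ring_1}) \<Rightarrow> 'a \<Rightarrow> 'b fps" where
  "charR \<phi> a = exp_fps0 (coeffwise \<phi> (ln1p_fps a))"

definition psi :: "('a::real_algebra_1 \<Rightarrow> 'b::{real_algebra_1, comm_ring_1}) \<Rightarrow> nat \<Rightarrow> 'a \<Rightarrow> 'b" where
  "psi \<phi> k a = fps_nth (charR \<phi> a) k"

definition connected_alg :: "'b::comm_ring_1 itself \<Rightarrow> bool" where
  "connected_alg _ \<longleftrightarrow> (\<forall>(b::'b) (k::nat). (\<Prod>j\<le>k. b - of_nat j) = 0 \<longrightarrow>
       (\<exists>j\<le>k. b = of_nat j))"

end

theory Submission imports Defs "HOL-Computational_Algebra.Polynomial_FPS" begin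

unbundle fps_syntax

(*
  Differentiating R(1,z) = exp(phi(ln(1+z))) gives the ODE (1+z) R' = phi(1) R, hence
  k! psi_k(1) = phi(1) (phi(1)-1) ... (phi(1)-k+1).  Since psi_(N+1)(1) = 0, connectedness
  forces phi(1) = n with n <= N, and then R(1,z) = (1+z)^n.

  For general a, the coefficients psi_k(a+t) are polynomials P_k in a real parameter t
  (apply R to the lifted map map_poly phi and the polynomial a+t).  Differentiating in t,
  d/dt ln(1+(a+t)z) = z - z^2 d/dz ln(1+(a+t)z), which turns into P_(k+1)' = (n-k) P_k.
  Descending from P_k = 0 for k > N, this kills all P_k with k > n, and integrating upwards
  gives P_k(t) = sum_j C(n-j,k-j) psi_j(a) t^(k-j).  Summing over k with the binomial theorem,
  sum_(k<=n) psi_k(a+s) = sum_(j<=n) psi_j(a) (1+s)^(n-j), which at s = 1/z - 1 is the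
  reciprocity formula.
*)

instantiation poly :: ("{real_algebra_1,comm_ring_1}") real_vector
begin
definition scaleR_poly_def: "scaleR r p = smult (of_real r) p"
instance by standard (simp_all add: scaleR_poly_def smult_add_right smult_add_left)
end

instance poly :: ("{real_algebra_1,comm_ring_1}") real_algebra_1
  by standard (simp_all add: scaleR_poly_def)

lemma of_real_poly: "(of_real r :: 'a::{real_algebra_1,comm_ring_1} poly) = [:of_real r:]"
  by (simp add: of_real_def scaleR_poly_def)

lemma poly_scaleR: "poly (r *\<^sub>R p) x = r *\<^sub>R poly p (x::'a::{real_algebra_1,comm_ring_1})"
  by (simp add: scaleR_poly_def scaleR_conv_of_real)

lemma of_nat_Suc_mult_eq_0_iff [simp]:
  "of_nat (Suc m) * x = 0 \<longleftrightarrow> x = (0::'a::real_algebra_1)"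
proof -
  have "of_nat (Suc m) * x = real (Suc m) *\<^sub>R x" by (simp add: scaleR_conv_of_real)
  then show ?thesis by simp
qed

lemma of_nat_mult_eq_scaleR: "of_nat m * x = real m *\<^sub>R (x::'a::real_algebra_1)"
  by (simp add: scaleR_conv_of_real)

lemma of_nat_Suc_mult_cancel_left:
  "of_nat (Suc m) * x = of_nat (Suc m) * y \<longleftrightarrow> x = (y::'a::real_algebra_1)"
  using of_nat_Suc_mult_eq_0_iff[of m "x - y"] by (simp add: algebra_simps)

section \<open>The exponential of a power series\<close>

lemma exp_fps0_nth_0 [simp]: "exp_fps0 F $ 0 = 1"
  by (simp add: exp_fps0_def)

lemma exp_fps0_nth_truncate:
  assumes "F $ 0 = 0" and "k \<le> M"
  shows "exp_fps0 F $ k = (\<Sum>m\<le>M. (1 / fact m) *\<^sub>R (F ^ m) $ k)"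
  unfolding exp_fps0_def fps_nth_Abs_fps
  by (rule sum.mono_neutral_left) (use assms startsby_zero_power_prefix[OF assms(1)] in auto)

lemma exp_fps0_derivation:
  fixes d :: "'c::{real_algebra_1,comm_ring_1} fps \<Rightarrow> 'c fps"
  assumes add: "\<And>F G. d (F + G) = d F + d G"
    and scale: "\<And>r F. d (fps_const (of_real r) * F) = fps_const (of_real r) * d F"
    and leibniz: "\<And>F G. d (F * G) = F * d G + G * d F"
    and local: "\<And>F G k. (\<And>j. j \<le> Suc k \<Longrightarrow> F $ j = G $ j) \<Longrightarrow> d F $ k = d G $ k"
    and F0: "F $ 0 = 0"
  shows "d (exp_fps0 F) = d F * exp_fps0 F"
proof -
  define S where "S K = (\<Sum>m\<le>K. fps_const (of_real (1 / fact m)) * F ^ m)" for K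
  have S_nth: "S K $ k = (\<Sum>m\<le>K. (1 / fact m) *\<^sub>R (F ^ m) $ k)" for K k
    by (simp add: S_def fps_sum_nth scaleR_conv_of_real)
  have d_0: "d 0 = 0" using add[of 0 0] by simp
  have d_1: "d 1 = 0" using leibniz[of 1 1] by simp
  have d_power: "d (F ^ m) = of_nat m * F ^ (m - 1) * d F" for m
  proof (induction m)
    case (Suc m)
    show ?case
    proof (cases m)
      case 0 then show ?thesis using leibniz[of F 1] d_1 by simp
    next
      case (Suc m')
      then show ?thesis using Suc.IH leibniz[of F "F ^ m"] by (simp add: algebra_simps)
    qed
  qed (simp add: d_1)
  have d_sum: "d (sum f A) = (\<Sum>x\<in>A. d (f x))" for f :: "nat \<Rightarrow> _" and A
    by (induction A rule: infinite_finite_induct) (simp_all add: d_0 add)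
  have fact_Suc_of_nat: "fps_const (of_real (1 / fact (Suc m))) * of_nat (Suc m)
      = (fps_const (of_real (1 / fact m)) :: 'c fps)" for m
  proof -
    have "1 / fact (Suc m) * real (Suc m) = 1 / fact m"
      by (simp add: field_simps del: of_nat_Suc)
    then show ?thesis
      by (metis fps_const_mult fps_of_nat of_real_mult of_real_of_nat_eq)
  qed
  have d_S: "d (S (Suc K)) = d F * S K" for K
  proof -
    have "d (S (Suc K))
        = (\<Sum>m\<le>Suc K. fps_const (of_real (1 / fact m)) * (of_nat m * F ^ (m - 1) * d F))"
      by (simp only: S_def d_sum scale d_power)
    also have "\<dots> = (\<Sum>m\<le>K. fps_const (of_real (1 / fact (Suc m))) * (of_nat (Suc m) * F ^ m * d F))"
      by (subst sum.atMost_Suc_shift) simp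
    also have "\<dots> = (\<Sum>m\<le>K. d F * (fps_const (of_real (1 / fact m)) * F ^ m))"
      by (simp only: mult.assoc[symmetric] fact_Suc_of_nat) (simp add: mult_ac)
    finally show ?thesis by (simp add: S_def sum_distrib_left)
  qed
  show ?thesis
  proof (rule fps_ext)
    fix k
    \<comment> \<open>by locality, the k-th coefficient only sees the partial sum up to degree k+1\<close>
    have "d (exp_fps0 F) $ k = d (S (Suc k)) $ k"
      by (rule local) (simp add: S_nth exp_fps0_nth_truncate[OF F0])
    also have "\<dots> = (d F * exp_fps0 F) $ k"
      unfolding d_S fps_mult_nth S_nth
      by (rule sum.cong[OF refl]) (simp add: exp_fps0_nth_truncate[OF F0, of _ k])
    finally show "d (exp_fps0 F) $ k = (d F * exp_fps0 F) $ k" .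
  qed
qed

lemma fps_deriv_exp_fps0:
  fixes F :: "'c::{real_algebra_1,comm_ring_1} fps"
  assumes "F $ 0 = 0"
  shows "fps_deriv (exp_fps0 F) = fps_deriv F * exp_fps0 F"
  by (rule exp_fps0_derivation) (simp_all add: assms fps_deriv_mult mult.commute)

lemma exp_fps0_nth_hom:
  fixes h :: "'c::{real_algebra_1,comm_ring_1} \<Rightarrow> 'd::{real_algebra_1,comm_ring_1}"
  assumes add: "\<And>x y. h (x + y) = h x + h y" and mult: "\<And>x y. h (x * y) = h x * h y"
    and one: "h 1 = 1" and scale: "\<And>r x. h (r *\<^sub>R x) = r *\<^sub>R h x"
  shows "h (exp_fps0 F $ k) = exp_fps0 (coeffwise h F) $ k"
proof -
  have h_0: "h 0 = 0" using add[of 0 0] by simp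
  have h_sum: "h (sum f A) = (\<Sum>x\<in>A. h (f x))" for f :: "nat \<Rightarrow> _" and A
    by (induction A rule: infinite_finite_induct) (simp_all add: h_0 add)
  have h_power: "h ((F ^ m) $ j) = (coeffwise h F ^ m) $ j" for m j
    by (induction m arbitrary: j) (simp_all add: one h_0 fps_mult_nth h_sum mult coeffwise_def)
  show ?thesis by (simp add: exp_fps0_def h_sum scale h_power)
qed

section \<open>The equation (1 + z) G' = b G\<close>

lemma binomial_ode_coeff_rec:
  fixes G :: "'c::{real_algebra_1,comm_ring_1} fps"
  assumes "(1 + fps_X) * fps_deriv G = fps_const b * G"
  shows "of_nat (Suc k) * G $ Suc k = (b - of_nat k) * G $ k"
proof -
  have "((1 + fps_X) * fps_deriv G) $ k = (fps_const b * G) $ k" using assms by simp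
  then have "of_nat (Suc k) * G $ Suc k + of_nat k * G $ k = b * G $ k"
    by (cases k) (simp_all add: distrib_right algebra_simps)
  then show ?thesis by (simp add: algebra_simps)
qed

lemma binomial_ode_unique:
  fixes G H :: "'c::{real_algebra_1,comm_ring_1} fps"
  assumes "(1 + fps_X) * fps_deriv G = fps_const b * G"
    and "(1 + fps_X) * fps_deriv H = fps_const b * H"
    and "G $ 0 = H $ 0"
  shows "G = H"
proof (rule fps_ext)
  fix k show "G $ k = H $ k"
  proof (induction k)
    case 0 then show ?case using assms(3) .
  next
    case (Suc k)
    have "of_nat (Suc k) * G $ Suc k = of_nat (Suc k) * H $ Suc k"
      using binomial_ode_coeff_rec[OF assms(1), of k] binomial_ode_coeff_rec[OF assms(2), of k] Suc
      by simp
    then show ?case by (simp only: of_nat_Suc_mult_cancel_left)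
  qed
qed

lemma binomial_ode_coeff:
  fixes G :: "'c::{real_algebra_1,comm_ring_1} fps"
  assumes "(1 + fps_X) * fps_deriv G = fps_const b * G" and "G $ 0 = 1"
  shows "of_nat (fact k) * G $ k = (\<Prod>j<k. b - of_nat j)"
proof (induction k)
  case 0 then show ?case using assms(2) by simp
next
  case (Suc k)
  have "of_nat (fact (Suc k)) * G $ Suc k = of_nat (fact k) * (of_nat (Suc k) * G $ Suc k)"
    by (simp only: fact_Suc of_nat_mult of_nat_id mult.assoc mult.commute mult.left_commute)
  also have "\<dots> = (b - of_nat k) * (of_nat (fact k) * G $ k)"
    by (simp only: binomial_ode_coeff_rec[OF assms(1)] mult.assoc mult.commute mult.left_commute)
  also have "\<dots> = (\<Prod>j<Suc k. b - of_nat j)"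
    by (simp only: prod.lessThan_Suc Suc.IH mult.commute[of _ "b - of_nat k"])
  finally show ?case .
qed

lemma binomial_ode_power:
  "(1 + fps_X) * fps_deriv ((1 + fps_X) ^ n) = fps_const (of_nat n :: 'c::comm_ring_1) * (1 + fps_X) ^ n"
proof (cases n)
  case (Suc m)
  have "fps_deriv ((1 + fps_X :: 'c fps) ^ n) = of_nat n * (1 + fps_X) ^ m"
    using fps_deriv_power'[of "1 + fps_X :: 'c fps" n] by (simp add: Suc)
  then have "(1 + fps_X) * fps_deriv ((1 + fps_X) ^ n) = of_nat n * (1 + fps_X :: 'c fps) ^ n"
    by (simp add: Suc mult_ac)
  then show ?thesis by (simp add: fps_of_nat)
qed simp

text \<open>The library's \<open>pderiv\<close> requires a ring without zero divisors, which the target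
  algebra need not be.\<close>

definition poly_deriv :: "'c::comm_ring_1 poly \<Rightarrow> 'c poly" where
  "poly_deriv p = Abs_poly (\<lambda>n. of_nat (Suc n) * coeff p (Suc n))"

lemma coeff_poly_deriv: "coeff (poly_deriv p) n = of_nat (Suc n) * coeff p (Suc n)"
proof -
  have "coeff (poly_deriv p) = (\<lambda>n. of_nat (Suc n) * coeff p (Suc n))"
    unfolding poly_deriv_def by (rule coeff_Abs_poly[of "degree p"]) (simp add: coeff_eq_0)
  then show ?thesis by simp
qed

lemma fps_of_poly_poly_deriv: "fps_of_poly (poly_deriv p) = fps_deriv (fps_of_poly p)"
  by (rule fps_ext) (simp add: coeff_poly_deriv)

lemma poly_deriv_eqI: "fps_of_poly q = fps_deriv (fps_of_poly p) \<Longrightarrow> poly_deriv p = q"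
  by (simp add: fps_of_poly_poly_deriv flip: fps_of_poly_eq_iff)

lemma poly_deriv_0 [simp]: "poly_deriv 0 = 0"
  by (rule poly_eqI) (simp add: coeff_poly_deriv)

lemma poly_deriv_add: "poly_deriv (p + q) = poly_deriv p + poly_deriv q"
  by (rule poly_deriv_eqI) (simp add: fps_of_poly_add fps_of_poly_poly_deriv)

lemma poly_deriv_mult: "poly_deriv (p * q) = p * poly_deriv q + q * poly_deriv p"
  by (rule poly_deriv_eqI)
    (simp add: fps_of_poly_add fps_of_poly_mult fps_of_poly_poly_deriv fps_deriv_mult algebra_simps)

lemma poly_deriv_smult: "poly_deriv (smult c p) = smult c (poly_deriv p)"
  by (rule poly_eqI) (simp add: coeff_poly_deriv algebra_simps)

lemma poly_deriv_sum: "poly_deriv (sum f A) = (\<Sum>x\<in>A. poly_deriv (f x))"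
  by (induction A rule: infinite_finite_induct) (simp_all add: poly_deriv_add)

lemma poly_deriv_linear_power: "poly_deriv ([:a, 1:] ^ n) = of_nat n * [:a, 1:] ^ (n - 1)"
proof -
  have "fps_of_poly (of_nat n :: 'a poly) = of_nat n" for n
    by (induction n) (simp_all add: fps_of_poly_add)
  moreover have "fps_deriv (fps_of_poly [:a, 1:]) = 1"
    by (rule fps_ext) (simp add: coeff_pCons split: nat.split)
  ultimately show ?thesis
    by (intro poly_deriv_eqI) (simp add: fps_of_poly_mult fps_of_poly_power fps_deriv_power')
qed

lemma poly_deriv_monom: "poly_deriv (monom c n) = monom (of_nat n * c) (n - 1)"
  by (cases n) (auto intro!: poly_eqI simp add: coeff_poly_deriv coeff_monom)

lemma poly_deriv_map_poly:
  fixes \<phi> :: "'a::{real_algebra_1,comm_ring_1} \<Rightarrow> 'b::{real_algebra_1,comm_ring_1}"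
  assumes "linear \<phi>"
  shows "poly_deriv (map_poly \<phi> p) = map_poly \<phi> (poly_deriv p)"
  by (rule poly_eqI)
    (simp only: coeff_map_poly[of \<phi>, OF linear_0[OF assms]] coeff_poly_deriv
      of_nat_mult_eq_scaleR linear_scale[OF assms])

lemma poly_deriv_eq_imp_eq:
  fixes p q :: "'c::{real_algebra_1,comm_ring_1} poly"
  assumes "poly_deriv p = poly_deriv q" and "poly p 0 = poly q 0"
  shows "p = q"
proof (rule poly_eqI)
  fix n show "coeff p n = coeff q n"
  proof (cases n)
    case 0 then show ?thesis using assms(2) by (simp add: poly_0_coeff_0)
  next
    case (Suc m)
    then show ?thesis
      using arg_cong[OF assms(1), of "\<lambda>p. coeff p m"]
      by (simp add: coeff_poly_deriv of_nat_Suc_mult_cancel_left del: of_nat_Suc)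
  qed
qed

lemma poly_eq_0_if_vanishes_on_finite:
  fixes p :: "'c::{real_algebra_1,comm_ring_1} poly"
  shows "finite S \<Longrightarrow> degree p < card S \<Longrightarrow> (\<forall>s\<in>S. poly p (of_real s) = 0) \<Longrightarrow> p = 0"
proof (induction "degree p" arbitrary: p S)
  case 0
  then obtain r where "r \<in> S" by fastforce
  moreover obtain c where "p = [:c:]" using degree0_coeffs[OF 0(1)[symmetric]] by blast
  ultimately show ?case using 0 by auto
next
  case (Suc d)
  then obtain r where r: "r \<in> S" by fastforce
  define q where "q = synthetic_div p (of_real r)"
  have p_eq: "p = [:- of_real r, 1:] * q"
    using synthetic_div_correct'[of "of_real r" p] Suc.prems r by (simp add: q_def)
  have "q = 0"
  proof (rule Suc.hyps(1)[of q "S - {r}"])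
    show "d = degree q" using Suc.hyps(2) by (simp add: q_def degree_synthetic_div)
    with Suc.prems Suc.hyps(2) r show "finite (S - {r})" "degree q < card (S - {r})" by simp_all
    show "\<forall>s\<in>S - {r}. poly q (of_real s) = 0"
    proof
      fix s assume s: "s \<in> S - {r}"
      have "0 = poly p (of_real s)" using Suc.prems s by simp
      also have "\<dots> = (s - r) *\<^sub>R poly q (of_real s)"
        by (subst p_eq) (simp add: scaleR_conv_of_real algebra_simps)
      finally show "poly q (of_real s) = 0" using s by simp
    qed
  qed
  then show ?case using p_eq by simp
qed

lemma poly_eq_0_if_vanishes_on_reals:
  fixes p :: "'c::{real_algebra_1,comm_ring_1} poly"
  assumes "\<And>s. poly p (of_real s) = 0"
  shows "p = 0"
proof (rule poly_eq_0_if_vanishes_on_finite)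
  have "card (real ` {..degree p}) = Suc (degree p)"
    by (subst card_image) (auto simp: inj_on_def)
  then show "degree p < card (real ` {..degree p})" by simp
qed (use assms in auto)

lemma smult_sum_right: "smult c (sum f A) = (\<Sum>x\<in>A. smult c (f x))"
  by (induction A rule: infinite_finite_induct) (simp_all add: smult_add_right)

definition binom_poly :: "nat \<Rightarrow> (nat \<Rightarrow> 'c::comm_ring_1) \<Rightarrow> nat \<Rightarrow> 'c poly" where
  "binom_poly n c k = (\<Sum>j\<le>k. monom (of_nat ((n - j) choose (k - j)) * c j) (k - j))"

lemma poly_binom_poly_0: "poly (binom_poly n c k) 0 = c k"
proof -
  have "poly (binom_poly n c k) 0 = (\<Sum>j\<le>k. if j = k then c j else 0)"
    unfolding binom_poly_def poly_sum
    by (rule sum.cong[OF refl]) (auto simp: poly_monom power_0_left)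
  then show ?thesis by simp
qed

lemma poly_deriv_binom_poly:
  "poly_deriv (binom_poly n c (Suc k)) = smult (of_nat (n - k)) (binom_poly n c k)"
proof -
  have "poly_deriv (binom_poly n c (Suc k))
      = (\<Sum>j\<le>Suc k. monom (of_nat (Suc k - j) * (of_nat ((n - j) choose (Suc k - j)) * c j)) (Suc k - j - 1))"
    by (simp only: binom_poly_def poly_deriv_sum poly_deriv_monom)
  also have "\<dots> = (\<Sum>j\<le>k. monom (of_nat (Suc k - j) * (of_nat ((n - j) choose (Suc k - j)) * c j)) (Suc k - j - 1))"
    by (simp only: sum.atMost_Suc diff_self_eq_0 of_nat_0 mult_zero_left monom_eq_0 add_0_right)
  also have "\<dots> = (\<Sum>j\<le>k. smult (of_nat (n - k)) (monom (of_nat ((n - j) choose (k - j)) * c j) (k - j)))"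
  proof (rule sum.cong[OF refl])
    fix j assume "j \<in> {..k}"
    then have Suc_k_j: "Suc k - j = Suc (k - j)" and "n - j - (k - j) = n - k" by auto
    have "Suc (k - j) * ((n - j) choose Suc (k - j)) = (n - j - (k - j)) * ((n - j) choose (k - j))"
      by (simp only: binomial_absorption binomial_absorb_comp)
    then have "(of_nat (Suc (k - j)) * of_nat ((n - j) choose Suc (k - j)) :: 'a)
        = of_nat (n - k) * of_nat ((n - j) choose (k - j))"
      by (metis of_nat_mult \<open>n - j - (k - j) = n - k\<close>)
    then show "monom (of_nat (Suc k - j) * (of_nat ((n - j) choose (Suc k - j)) * c j)) (Suc k - j - 1)
        = smult (of_nat (n - k)) (monom (of_nat ((n - j) choose (k - j)) * c j) (k - j))"
      by (simp only: Suc_k_j diff_Suc_1 smult_monom mult.assoc[symmetric])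
  qed
  also have "\<dots> = smult (of_nat (n - k)) (binom_poly n c k)"
    by (simp only: binom_poly_def smult_sum_right)
  finally show ?thesis .
qed

lemma sum_poly_binom_poly:
  "(\<Sum>k\<le>n. poly (binom_poly n c k) y) = (\<Sum>j\<le>n. c j * (y + 1) ^ (n - j))"
proof -
  define g where "g j i = of_nat ((n - j) choose i) * c j * y ^ i" for j i
  have "(\<Sum>k\<le>n. poly (binom_poly n c k) y) = (\<Sum>k\<le>n. \<Sum>j\<le>k. g j (k - j))"
    by (simp add: binom_poly_def poly_sum poly_monom g_def)
  also have "\<dots> = (\<Sum>(j, i)\<in>{(j, i). j + i \<le> n}. g j i)"
    by (rule sum.triangle_reindex_eq[symmetric])
  also have "{(j, i). j + i \<le> n} = Sigma {..n} (\<lambda>j. {..n - j})" by auto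
  also have "(\<Sum>(j, i)\<in>Sigma {..n} (\<lambda>j. {..n - j}). g j i) = (\<Sum>j\<le>n. \<Sum>i\<le>n - j. g j i)"
    by (rule sum.Sigma[symmetric]) auto
  also have "\<dots> = (\<Sum>j\<le>n. c j * (y + 1) ^ (n - j))"
  proof (rule sum.cong[OF refl])
    fix j
    have "(\<Sum>i\<le>n - j. g j i) = c j * (\<Sum>i\<le>n - j. of_nat ((n - j) choose i) * y ^ i * 1 ^ (n - j - i))"
      by (simp add: g_def sum_distrib_left mult_ac)
    also have "\<dots> = c j * (y + 1) ^ (n - j)" by (simp only: binomial_ring)
    finally show "(\<Sum>i\<le>n - j. g j i) = c j * (y + 1) ^ (n - j)" .
  qed
  finally show ?thesis .
qed

section \<open>The characteristic function of a linear map\<close>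

lemma coeffwise_ln1p_nth:
  fixes \<phi> :: "'a::{real_algebra_1,comm_ring_1} \<Rightarrow> 'b::{real_algebra_1,comm_ring_1}"
  assumes "linear \<phi>"
  shows "coeffwise \<phi> (ln1p_fps c) $ k
    = (if k = 0 then 0 else ((-1) ^ (k + 1) / real k) *\<^sub>R \<phi> (c ^ k))"
proof (cases "k = 0")
  case True then show ?thesis by (simp add: coeffwise_def ln1p_fps_def linear_0[OF assms])
next
  case False then show ?thesis
    unfolding coeffwise_def ln1p_fps_def fps_nth_Abs_fps by (simp only: if_False linear_scale[OF assms])
qed

lemma fps_deriv_coeffwise_ln1p_nth:
  fixes \<phi> :: "'a::{real_algebra_1,comm_ring_1} \<Rightarrow> 'b::{real_algebra_1,comm_ring_1}"
  assumes "linear \<phi>"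
  shows "fps_deriv (coeffwise \<phi> (ln1p_fps c)) $ k = (-1) ^ k *\<^sub>R \<phi> (c ^ Suc k)"
proof -
  have "fps_deriv (coeffwise \<phi> (ln1p_fps c)) $ k
      = (real (Suc k) * ((-1) ^ (k + 2) / real (Suc k))) *\<^sub>R \<phi> (c ^ Suc k)"
    by (simp only: fps_deriv_nth coeffwise_ln1p_nth[OF assms] of_nat_mult_eq_scaleR scaleR_scaleR)
      simp
  then show ?thesis by simp
qed

lemma charR_nth_0 [simp]: "charR \<phi> c $ 0 = 1"
  by (simp add: charR_def)

lemma fps_deriv_charR:
  fixes \<phi> :: "'a::{real_algebra_1,comm_ring_1} \<Rightarrow> 'b::{real_algebra_1,comm_ring_1}"
  assumes "linear \<phi>"
  shows "fps_deriv (charR \<phi> c) = fps_deriv (coeffwise \<phi> (ln1p_fps c)) * charR \<phi> c"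
  unfolding charR_def by (rule fps_deriv_exp_fps0) (simp add: coeffwise_ln1p_nth[OF assms])

lemma charR_one_ode:
  fixes \<phi> :: "'a::{real_algebra_1,comm_ring_1} \<Rightarrow> 'b::{real_algebra_1,comm_ring_1}"
  assumes "linear \<phi>"
  shows "(1 + fps_X) * fps_deriv (charR \<phi> 1) = fps_const (\<phi> 1) * charR \<phi> 1"
proof -
  have "(1 + fps_X) * fps_deriv (coeffwise \<phi> (ln1p_fps 1)) = fps_const (\<phi> 1)"
  proof (rule fps_ext)
    fix k show "((1 + fps_X) * fps_deriv (coeffwise \<phi> (ln1p_fps 1))) $ k = fps_const (\<phi> 1) $ k"
      by (cases k)
        (simp_all add: distrib_right fps_deriv_coeffwise_ln1p_nth[OF assms] del: fps_deriv_nth)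
  qed
  then show ?thesis by (simp add: fps_deriv_charR[OF assms] mult.assoc[symmetric])
qed

section \<open>Shifting the argument by a real parameter\<close>

text \<open>Evaluating the lifted map \<open>map_poly \<phi>\<close> on the polynomial a + t turns
  each \<open>\<psi>\<^sub>k(a + t)\<close> into a polynomial in t.\<close>

definition psi_poly :: "('a::{real_algebra_1,comm_ring_1} \<Rightarrow> 'b::{real_algebra_1,comm_ring_1})
    \<Rightarrow> nat \<Rightarrow> 'a \<Rightarrow> 'b poly" where
  "psi_poly \<phi> k a = psi (map_poly \<phi>) k [:a, 1:]"

lemma linear_map_poly:
  fixes \<phi> :: "'a::{real_algebra_1,comm_ring_1} \<Rightarrow> 'b::{real_algebra_1,comm_ring_1}"
  assumes "linear \<phi>"
  shows "linear (map_poly \<phi>)"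
proof (rule linearI)
  fix p q show "map_poly \<phi> (p + q) = map_poly \<phi> p + map_poly \<phi> q"
    by (rule poly_eqI) (simp add: coeff_map_poly linear_0[OF assms] linear_add[OF assms])
next
  fix r p show "map_poly \<phi> (r *\<^sub>R p) = r *\<^sub>R map_poly \<phi> p"
    by (rule poly_eqI)
      (simp add: coeff_map_poly linear_0[OF assms] scaleR_poly_def linear_scale[OF assms]
        flip: scaleR_conv_of_real)
qed

lemma poly_map_poly_of_real:
  fixes \<phi> :: "'a::{real_algebra_1,comm_ring_1} \<Rightarrow> 'b::{real_algebra_1,comm_ring_1}"
  assumes "linear \<phi>"
  shows "poly (map_poly \<phi> p) (of_real s) = \<phi> (poly p (of_real s))"
proof (induction p)
  case (pCons c p)
  have "\<phi> (c + of_real s * poly p (of_real s)) = \<phi> c + of_real s * \<phi> (poly p (of_real s))"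
    by (simp add: linear_add[OF assms] linear_scale[OF assms] flip: scaleR_conv_of_real)
  then show ?case by (simp add: map_poly_pCons linear_0[OF assms] pCons.IH)
qed (simp add: linear_0[OF assms])

lemma psi_poly_0 [simp]: "psi_poly \<phi> 0 a = 1"
  by (simp add: psi_poly_def psi_def)

lemma poly_psi_poly:
  fixes \<phi> :: "'a::{real_algebra_1,comm_ring_1} \<Rightarrow> 'b::{real_algebra_1,comm_ring_1}"
  assumes "linear \<phi>"
  shows "poly (psi_poly \<phi> k a) (of_real s) = psi \<phi> k (a + of_real s)"
proof -
  have "poly (psi_poly \<phi> k a) (of_real s)
      = exp_fps0 (coeffwise (\<lambda>p. poly p (of_real s))
          (coeffwise (map_poly \<phi>) (ln1p_fps [:a, 1:]))) $ k"
    unfolding psi_poly_def psi_def charR_def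
    by (rule exp_fps0_nth_hom) (simp_all add: poly_scaleR)
  also have "coeffwise (\<lambda>p. poly p (of_real s)) (coeffwise (map_poly \<phi>) (ln1p_fps [:a, 1:]))
      = coeffwise \<phi> (coeffwise (\<lambda>p. poly p (of_real s)) (ln1p_fps [:a, 1:]))"
    by (rule fps_ext) (simp add: coeffwise_def poly_map_poly_of_real[OF assms])
  also have "coeffwise (\<lambda>p. poly p (of_real s)) (ln1p_fps [:a, 1:]) = ln1p_fps (a + of_real s)"
    by (rule fps_ext) (simp add: coeffwise_def ln1p_fps_def poly_scaleR poly_power)
  finally show ?thesis by (simp add: psi_def charR_def)
qed

lemma coeffwise_poly_deriv_ln1p:
  fixes \<phi> :: "'a::{real_algebra_1,comm_ring_1} \<Rightarrow> 'b::{real_algebra_1,comm_ring_1}"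
    and a :: 'a
  assumes lin_phi: "linear \<phi>"
  defines "L \<equiv> coeffwise (map_poly \<phi>) (ln1p_fps [:a, 1:])"
  shows "coeffwise poly_deriv L = fps_const [:\<phi> 1:] * fps_X - fps_X ^ 2 * fps_deriv L"
proof (rule fps_ext)
  fix k
  have lin: "linear (map_poly \<phi>)" by (rule linear_map_poly[OF lin_phi])
  have L_k: "coeffwise poly_deriv L $ Suc k = (-1) ^ k *\<^sub>R map_poly \<phi> ([:a, 1:] ^ k)" for k
  proof -
    have "coeffwise poly_deriv L $ Suc k = poly_deriv (L $ Suc k)"
      by (simp add: coeffwise_def)
    also have "\<dots> = poly_deriv (((-1) ^ (Suc k + 1) / real (Suc k)) *\<^sub>R map_poly \<phi> ([:a, 1:] ^ Suc k))"
      by (simp only: L_def coeffwise_ln1p_nth[OF lin] nat.distinct(2) if_False)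
    also have "\<dots> = ((-1) ^ (Suc k + 1) / real (Suc k)) *\<^sub>R map_poly \<phi> (poly_deriv ([:a, 1:] ^ Suc k))"
      by (simp only: scaleR_poly_def poly_deriv_smult poly_deriv_map_poly[OF lin_phi])
    also have "\<dots> = ((-1) ^ (Suc k + 1) / real (Suc k) * real (Suc k)) *\<^sub>R map_poly \<phi> ([:a, 1:] ^ k)"
      by (simp only: poly_deriv_linear_power diff_Suc_1 of_nat_mult_eq_scaleR linear_scale[OF lin]
          scaleR_scaleR)
    finally show ?thesis by simp
  qed
  have L_deriv: "fps_deriv L $ k = (-1) ^ k *\<^sub>R map_poly \<phi> ([:a, 1:] ^ Suc k)" for k
    unfolding L_def by (rule fps_deriv_coeffwise_ln1p_nth[OF lin])
  have map_1: "map_poly \<phi> 1 = [:\<phi> 1:]"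
    by (simp add: one_pCons map_poly_pCons linear_0[OF lin_phi])
  show "coeffwise poly_deriv L $ k = (fps_const [:\<phi> 1:] * fps_X - fps_X ^ 2 * fps_deriv L) $ k"
  proof (cases k)
    case 0 then show ?thesis by (simp add: coeffwise_def L_def ln1p_fps_def)
  next
    case (Suc j)
    then show ?thesis
      by (cases j)
        (simp_all add: L_k L_deriv map_1 fps_X_power_mult_nth del: fps_deriv_nth)
  qed
qed

lemma coeffwise_poly_deriv_exp_fps0:
  fixes F :: "'c::{real_algebra_1,comm_ring_1} poly fps"
  assumes "F $ 0 = 0"
  shows "coeffwise poly_deriv (exp_fps0 F) = coeffwise poly_deriv F * exp_fps0 F"
proof (rule exp_fps0_derivation)
  fix F G :: "'c poly fps"
  show "coeffwise poly_deriv (F + G) = coeffwise poly_deriv F + coeffwise poly_deriv G"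
    by (rule fps_ext) (simp add: coeffwise_def poly_deriv_add)
  have "coeffwise poly_deriv (F * G) = F * coeffwise poly_deriv G + coeffwise poly_deriv F * G"
  proof (rule fps_ext)
    fix n
    have "coeffwise poly_deriv (F * G) $ n = (\<Sum>i=0..n. poly_deriv (F $ i * G $ (n - i)))"
      by (simp add: coeffwise_def fps_mult_nth poly_deriv_sum)
    also have "\<dots> = (\<Sum>i=0..n. F $ i * coeffwise poly_deriv G $ (n - i))
        + (\<Sum>i=0..n. coeffwise poly_deriv F $ i * G $ (n - i))"
      by (simp add: coeffwise_def poly_deriv_mult sum.distrib mult.commute)
    finally show "coeffwise poly_deriv (F * G) $ n
        = (F * coeffwise poly_deriv G + coeffwise poly_deriv F * G) $ n"
      by (simp add: fps_mult_nth)
  qed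
  then show "coeffwise poly_deriv (F * G) = F * coeffwise poly_deriv G + G * coeffwise poly_deriv F"
    by (simp add: mult.commute)
next
  fix r and F :: "'c poly fps"
  show "coeffwise poly_deriv (fps_const (of_real r) * F) = fps_const (of_real r) * coeffwise poly_deriv F"
    by (rule fps_ext) (simp add: coeffwise_def of_real_poly poly_deriv_smult)
qed (simp_all add: assms coeffwise_def)

lemma poly_deriv_psi_poly:
  fixes \<phi> :: "'a::{real_algebra_1,comm_ring_1} \<Rightarrow> 'b::{real_algebra_1,comm_ring_1}"
  assumes "linear \<phi>"
  shows "poly_deriv (psi_poly \<phi> (Suc k) a) = smult (\<phi> 1 - of_nat k) (psi_poly \<phi> k a)"
proof -
  let ?L = "coeffwise (map_poly \<phi>) (ln1p_fps [:a, 1:])"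
  let ?R = "charR (map_poly \<phi>) [:a, 1:]"
  have lin: "linear (map_poly \<phi>)" by (rule linear_map_poly[OF assms])
  have "coeffwise poly_deriv ?R = coeffwise poly_deriv ?L * ?R"
    unfolding charR_def
    by (rule coeffwise_poly_deriv_exp_fps0) (simp add: coeffwise_ln1p_nth[OF lin])
  also have "\<dots> = fps_const [:\<phi> 1:] * (fps_X * ?R) - fps_X ^ 2 * (fps_deriv ?L * ?R)"
    by (simp add: coeffwise_poly_deriv_ln1p[OF assms] algebra_simps)
  also have "fps_deriv ?L * ?R = fps_deriv ?R" by (simp add: fps_deriv_charR[OF lin])
  finally have "coeffwise poly_deriv ?R $ Suc k
      = (fps_const [:\<phi> 1:] * (fps_X * ?R) - fps_X ^ 2 * fps_deriv ?R) $ Suc k"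
    by simp
  then show ?thesis
    by (cases k)
      (simp_all add: coeffwise_def psi_poly_def psi_def fps_X_power_mult_nth smult_diff_left
        of_nat_poly algebra_simps)
qed

section \<open>Consequences of \<open>\<phi>(1) = n\<close>\<close>

lemma psi_poly_eq_0_above:
  fixes \<phi> :: "'a::{real_algebra_1,comm_ring_1} \<Rightarrow> 'b::{real_algebra_1,comm_ring_1}"
  assumes lin: "linear \<phi>" and n: "\<phi> 1 = of_nat n"
    and vanish: "\<forall>a. \<forall>k>N. psi \<phi> k a = 0" and "n < k"
  shows "psi_poly \<phi> k a = 0"
proof -
  have above_N: "psi_poly \<phi> k a = 0" if "N < k" for k
    by (rule poly_eq_0_if_vanishes_on_reals) (simp add: poly_psi_poly[OF lin] vanish that)
  have descend: "psi_poly \<phi> k a = 0" if "n < k" and "psi_poly \<phi> (Suc k) a = 0" for k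
  proof -
    obtain m where m: "k - n = Suc m" using \<open>n < k\<close> by (metis Suc_diff_Suc)
    have "\<phi> 1 - of_nat k = - of_nat (k - n)"
      using \<open>n < k\<close> by (simp add: n of_nat_diff)
    then have c: "\<phi> 1 - of_nat k = - of_nat (Suc m)"
      by (simp only: m)
    have "smult (\<phi> 1 - of_nat k) (psi_poly \<phi> k a) = 0"
      using poly_deriv_psi_poly[OF lin, of k a] that(2) by simp
    then have "- (of_nat (Suc m) * coeff (psi_poly \<phi> k a) i) = 0" for i
      unfolding c by (metis coeff_0 coeff_smult mult_minus_left)
    then show ?thesis by (intro poly_eqI) (simp del: of_nat_Suc)
  qed
  have "k \<le> max (Suc N) k" by simp
  then show ?thesis
  proof (rule inc_induct[where P = "\<lambda>j. psi_poly \<phi> j a = 0"])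
    show "psi_poly \<phi> (max (Suc N) k) a = 0" by (rule above_N) simp
  next
    fix j assume "k \<le> j" and Suc_j: "psi_poly \<phi> (Suc j) a = 0"
    then have "n < j" using \<open>n < k\<close> by simp
    from this Suc_j show "psi_poly \<phi> j a = 0" by (rule descend)
  qed
qed


lemma psi_poly_eq_binom_poly:
  fixes \<phi> :: "'a::{real_algebra_1,comm_ring_1} \<Rightarrow> 'b::{real_algebra_1,comm_ring_1}"
  assumes lin: "linear \<phi>" and n: "\<phi> 1 = of_nat n" and "k \<le> n"
  shows "psi_poly \<phi> k a = binom_poly n (\<lambda>j. psi \<phi> j a) k"
  using \<open>k \<le> n\<close>
proof (induction k)
  case 0 then show ?case by (simp add: binom_poly_def psi_def one_pCons)
next
  case (Suc k)
  show ?case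
  proof (rule poly_deriv_eq_imp_eq)
    show "poly_deriv (psi_poly \<phi> (Suc k) a) = poly_deriv (binom_poly n (\<lambda>j. psi \<phi> j a) (Suc k))"
      using Suc by (simp add: poly_deriv_psi_poly[OF lin] poly_deriv_binom_poly n of_nat_diff)
    show "poly (psi_poly \<phi> (Suc k) a) 0 = poly (binom_poly n (\<lambda>j. psi \<phi> j a) (Suc k)) 0"
      using poly_psi_poly[OF lin, of "Suc k" a 0] by (simp add: poly_binom_poly_0)
  qed
qed

lemma sum_psi_shift:
  fixes \<phi> :: "'a::{real_algebra_1,comm_ring_1} \<Rightarrow> 'b::{real_algebra_1,comm_ring_1}"
  assumes lin: "linear \<phi>" and n: "\<phi> 1 = of_nat n"
  shows "(\<Sum>k\<le>n. psi \<phi> k (a + of_real s)) = (\<Sum>j\<le>n. psi \<phi> j a * (of_real s + 1) ^ (n - j))"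
proof -
  have "(\<Sum>k\<le>n. psi \<phi> k (a + of_real s)) = (\<Sum>k\<le>n. poly (binom_poly n (\<lambda>j. psi \<phi> j a) k) (of_real s))"
    by (rule sum.cong[OF refl]) (simp add: psi_poly_eq_binom_poly[OF lin n] flip: poly_psi_poly[OF lin])
  then show ?thesis by (simp only: sum_poly_binom_poly)
qed

lemma psi_reciprocity:
  fixes \<phi> :: "'a::{real_algebra_1,comm_ring_1} \<Rightarrow> 'b::{real_algebra_1,comm_ring_1}"
  assumes lin: "linear \<phi>" and n: "\<phi> 1 = of_nat n" and "z \<noteq> 0"
  shows "1 + (\<Sum>k=1..n. psi \<phi> k a * of_real z ^ k)
    = of_real z ^ n * (1 + (\<Sum>k=1..n. psi \<phi> k (of_real (1 / z) + a - 1)))"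
proof -
  have split_0: "(\<Sum>k\<le>n. f k) = f 0 + (\<Sum>k=1..n. f k)" for f :: "nat \<Rightarrow> 'b"
    by (simp add: atMost_atLeast0 sum.atLeast_Suc_atMost)
  have shift: "of_real (1 / z) + a - 1 = a + of_real (1 / z - 1)"
    by (simp add: of_real_diff algebra_simps)
  have "of_real z ^ n * (1 + (\<Sum>k=1..n. psi \<phi> k (of_real (1 / z) + a - 1)))
      = of_real z ^ n * (\<Sum>j\<le>n. psi \<phi> j a * of_real (1 / z) ^ (n - j))"
    using sum_psi_shift[OF lin n, of a "1 / z - 1"]
    by (simp add: split_0 shift psi_def of_real_diff)
  also have "\<dots> = (\<Sum>j\<le>n. psi \<phi> j a * of_real z ^ j)"
    unfolding sum_distrib_left
  proof (rule sum.cong[OF refl])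
    fix j assume "j \<in> {..n}"
    then have "z ^ n * (1 / z) ^ (n - j) = z ^ j"
      using \<open>z \<noteq> 0\<close> by (simp add: power_diff power_one_over field_simps)
    then show "of_real z ^ n * (psi \<phi> j a * of_real (1 / z) ^ (n - j)) = psi \<phi> j a * of_real z ^ j"
      by (metis mult.left_commute of_real_mult of_real_power)
  qed
  also have "\<dots> = 1 + (\<Sum>k=1..n. psi \<phi> k a * of_real z ^ k)"
    by (simp add: split_0 psi_def)
  finally show ?thesis by simp
qed

theorem mainTheorem2:
  fixes \<phi> :: "'a::{real_algebra_1, comm_ring_1} \<Rightarrow> 'b::{real_algebra_1, comm_ring_1}"
    and N :: nat
  assumes conn: "connected_alg TYPE('b)"
    and lin: "linear \<phi>"
    and polyN: "\<forall>a. \<forall>k>N. psi \<phi> k a = 0"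
  shows "\<exists>n::nat. n \<le> N \<and> \<phi> 1 = of_nat n
     \<and> (\<forall>a. \<forall>k>n. psi \<phi> k a = 0)
     \<and> charR \<phi> 1 = (1 + fps_X) ^ n
     \<and> (\<forall>a. \<forall>z::real. z \<noteq> 0 \<longrightarrow>
          1 + (\<Sum>k=1..n. psi \<phi> k a * of_real z ^ k)
          = of_real z ^ n * (1 + (\<Sum>k=1..n. psi \<phi> k (of_real (1 / z) + a - 1))))"
proof -
  have "of_nat (fact (Suc N)) * charR \<phi> 1 $ Suc N = (\<Prod>j<Suc N. \<phi> 1 - of_nat j)"
    by (rule binomial_ode_coeff[OF charR_one_ode[OF lin]]) simp
  moreover have "charR \<phi> 1 $ Suc N = 0" using polyN by (simp add: psi_def)
  ultimately have "(\<Prod>j\<le>N. \<phi> 1 - of_nat j) = 0" by (simp add: lessThan_Suc_atMost)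
  then obtain n where "n \<le> N" and n: "\<phi> 1 = of_nat n"
    using conn unfolding connected_alg_def by blast
  have "charR \<phi> 1 = (1 + fps_X) ^ n"
    by (rule binomial_ode_unique[OF charR_one_ode[OF lin, unfolded n] binomial_ode_power])
      (simp add: fps_nth_power_0)
  moreover have "psi \<phi> k a = 0" if "n < k" for a k
    using poly_psi_poly[OF lin, of k a 0] psi_poly_eq_0_above[OF lin n polyN that] by simp
  ultimately show ?thesis
    using \<open>n \<le> N\<close> n psi_reciprocity[OF lin n] by blast
qed

end
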